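(* Let $N \ge 2$ and $1 \le M < N$ be integers, and let $K$ be an $N \times N$ real symmetric positive definite matrix. For an index set $\alpha \subset \{1,\dots,N\}$ with $|\alpha| = M$, let $\alpha^c = \{1,\dots,N\}\setminus\alpha$ and define the Schur complement $$K/K_{\alpha\alpha} \;=\; K_{\alpha^c\alpha^c} - K_{\alpha^c\alpha}\,K_{\alpha\alpha}^{-1}\,K_{\alpha\alpha^c},$$ an $(N-M)\times(N-M)$ symmetric positive definite matrix (rows and columns listed in increasing order of the indices in $\alpha^c$). Let $\mathcal{M} = \{K/K_{\alpha\alpha} : \alpha \subset \{1,\dots,N\},\ |\alpha| = M\}$, partially ordered by the Loewner order. Let $\alpha^*$ be an index set of size $M$ that maximizes $\operatorname{Tr}\big((K/K_{\alpha\alpha})^{-1}\big)$ over all index sets $\alpha$ of size $M$, and let $A^* = K/K_{\alpha^*\alpha^*}$. Then there is no $B \in \mathcal{M}$ with $A^* > B$, i.e. there is no $B \in \mathcal{M}$ such that $A^* - B$ is positive semidefinite and $A^* \neq B$.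
   Context: Loewner order on symmetric matrices of the same size: $A \le B$ iff $B - A$ is positive semidefinite; $A < B$ (equivalently $B > A$) means $A \le B$ and $A \ne B$. $K_{\beta\gamma}$ denotes the submatrix of $K$ with rows indexed by $\beta$ and columns indexed by $\gamma$. $\operatorname{Tr}$ denotes the trace. *)

theory Defs
  imports "Jordan_Normal_Form.Matrix" "Jordan_Normal_Form.DL_Submatrix"
begin

(* Indices are 0-based: {0..<N} plays the role of {1,...,N}. *)

definition sym_mat :: "real mat \<Rightarrow> bool" where
  "sym_mat A \<longleftrightarrow> dim_row A = dim_col A \<and> transpose_mat A = A"

definition psd_mat :: "real mat \<Rightarrow> bool" where
  "psd_mat A \<longleftrightarrow> sym_mat A \<and>
     (\<forall>v \<in> carrier_vec (dim_row A). v \<bullet> (A *\<^sub>v v) \<ge> 0)"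

definition pd_mat :: "real mat \<Rightarrow> bool" where
  "pd_mat A \<longleftrightarrow> sym_mat A \<and>
     (\<forall>v \<in> carrier_vec (dim_row A). v \<noteq> 0\<^sub>v (dim_row A) \<longrightarrow> v \<bullet> (A *\<^sub>v v) > 0)"

definition loewner_le :: "real mat \<Rightarrow> real mat \<Rightarrow> bool" where
  "loewner_le A B \<longleftrightarrow> sym_mat A \<and> sym_mat B \<and> dim_row A = dim_row B \<and> psd_mat (B - A)"

definition loewner_lt :: "real mat \<Rightarrow> real mat \<Rightarrow> bool" where
  "loewner_lt A B \<longleftrightarrow> loewner_le A B \<and> A \<noteq> B"

definition mtrace :: "real mat \<Rightarrow> real" where
  "mtrace A = (\<Sum>i<dim_row A. A $$ (i, i))"

definition minv :: "real mat \<Rightarrow> real mat" where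
  "minv A = (SOME B. B \<in> carrier_mat (dim_row A) (dim_row A) \<and>
                      A * B = 1\<^sub>m (dim_row A) \<and> B * A = 1\<^sub>m (dim_row A))"

(* Schur complement K / K_{alpha alpha}; submatrix lists indices in increasing order *)
definition schur :: "real mat \<Rightarrow> nat set \<Rightarrow> real mat" where
  "schur K \<alpha> = (let \<beta> = {0..<dim_row K} - \<alpha> in
     submatrix K \<beta> \<beta> - submatrix K \<beta> \<alpha> * minv (submatrix K \<alpha> \<alpha>) * submatrix K \<alpha> \<beta>)"

end

theory Submission
  imports Defs "Jordan_Normal_Form.Determinant"
begin

(* Suppose schur K alpha < schur K alphas in the Loewner order. Since A |-> Tr (A^-1) is strictly
   antitone on positive definite matrices, Tr ((schur K alphas)^-1) < Tr ((schur K alpha)^-1),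
   contradicting the maximality of alphas. Antitonicity comes from the identity
     B^-1 - A^-1 = A^-1 D A^-1 + (D A^-1)^T B^-1 (D A^-1),   D = A - B,
   whose first summand is positive semidefinite and nonzero and whose second is positive
   semidefinite. The Schur complements are positive definite because schur K alpha = T^T K T for
   T = S_beta - S_alpha K_alpha_alpha^-1 K_alpha_beta, where S_I is the 0/1 matrix selecting the
   coordinates in I; T is injective since S_beta^T T = 1. *)

lemma pd_mat_imp_psd_mat:
  assumes "pd_mat A"
  shows "psd_mat A"
  unfolding psd_mat_def
proof (intro conjI ballI)
  show "sym_mat A" using assms unfolding pd_mat_def by simp
  fix v :: "real vec"
  assume v: "v \<in> carrier_vec (dim_row A)"
  show "0 \<le> v \<bullet> (A *\<^sub>v v)"
  proof (cases "v = 0\<^sub>v (dim_row A)")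
    case True
    have "A *\<^sub>v v \<in> carrier_vec (dim_row A)" by (simp add: carrier_vecI)
    with True show ?thesis by simp
  next
    case False
    then show ?thesis using assms v unfolding pd_mat_def by (simp add: less_imp_le)
  qed
qed

lemma pd_mat_det_nonzero:
  assumes "pd_mat A" and A: "A \<in> carrier_mat n n"
  shows "det A \<noteq> 0"
proof
  assume "det A = 0"
  then obtain v where "v \<in> carrier_vec n" "v \<noteq> 0\<^sub>v n" "A *\<^sub>v v = 0\<^sub>v n"
    using det_0_iff_vec_prod_zero[OF A] by auto
  then show False using assms unfolding pd_mat_def by auto
qed

lemma minv_inverse:
  assumes A: "A \<in> carrier_mat n n" and "det A \<noteq> 0"
  shows "minv A \<in> carrier_mat n n" "A * minv A = 1\<^sub>m n" "minv A * A = 1\<^sub>m n"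
proof -
  have "A \<in> Units (ring_mat TYPE(real) n ())"
    using det_non_zero_imp_unit[OF assms] .
  then have "\<exists>B. B \<in> carrier_mat n n \<and> A * B = 1\<^sub>m n \<and> B * A = 1\<^sub>m n"
    unfolding Units_def ring_mat_def by auto
  from someI_ex[OF this] show "minv A \<in> carrier_mat n n" "A * minv A = 1\<^sub>m n" "minv A * A = 1\<^sub>m n"
    unfolding minv_def using A by auto
qed

lemma transpose_minv:
  assumes A: "A \<in> carrier_mat n n" and "det A \<noteq> 0" and sym: "transpose_mat A = A"
  shows "transpose_mat (minv A) = minv A"
proof -
  note inv = minv_inverse[OF assms(1,2)]
  have "A * transpose_mat (minv A) = transpose_mat (minv A * A)"
    using transpose_mult[OF inv(1) A] sym by simp
  then have "A * transpose_mat (minv A) = 1\<^sub>m n" using inv(3) by simp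
  then have "transpose_mat (minv A) = (minv A * A) * transpose_mat (minv A)"
    using inv by simp
  also have "\<dots> = minv A * (A * transpose_mat (minv A))"
    by (rule assoc_mult_mat[OF inv(1) A, of _ n]) (simp add: inv(1))
  also have "\<dots> = minv A"
    using inv \<open>A * transpose_mat (minv A) = 1\<^sub>m n\<close> by simp
  finally show ?thesis .
qed

lemma quadratic_form_congruence:
  fixes P D :: "real mat"
  assumes P: "P \<in> carrier_mat n m" and D: "D \<in> carrier_mat n n" and v: "v \<in> carrier_vec m"
  shows "v \<bullet> ((transpose_mat P * D * P) *\<^sub>v v) = (P *\<^sub>v v) \<bullet> (D *\<^sub>v (P *\<^sub>v v))"
proof -
  have "(transpose_mat P * D * P) *\<^sub>v v = (transpose_mat P * D) *\<^sub>v (P *\<^sub>v v)"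
    using P D v by (intro assoc_mult_mat_vec[of _ m n]) auto
  also have "\<dots> = transpose_mat P *\<^sub>v (D *\<^sub>v (P *\<^sub>v v))"
    using P D v by (intro assoc_mult_mat_vec[of _ m n _ n]) auto
  finally have "v \<bullet> ((transpose_mat P * D * P) *\<^sub>v v)
      = (transpose_mat P *\<^sub>v (D *\<^sub>v (P *\<^sub>v v))) \<bullet> v"
    using P D v by (simp add: comm_scalar_prod[of _ m])
  also have "\<dots> = (D *\<^sub>v (P *\<^sub>v v)) \<bullet> (P *\<^sub>v v)"
    using P D v by (intro transpose_vec_mult_scalar) auto
  also have "\<dots> = (P *\<^sub>v v) \<bullet> (D *\<^sub>v (P *\<^sub>v v))"
    using P D v by (intro comm_scalar_prod[of _ n]) auto
  finally show ?thesis .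
qed

lemma transpose_congruence:
  fixes P D :: "real mat"
  assumes P: "P \<in> carrier_mat n m" and D: "D \<in> carrier_mat n n"
  shows "transpose_mat (transpose_mat P * D * P) = transpose_mat P * transpose_mat D * P"
proof -
  have "transpose_mat (transpose_mat P * D * P) = transpose_mat P * transpose_mat (transpose_mat P * D)"
    using P D by (intro transpose_mult[of _ m n]) auto
  also have "transpose_mat (transpose_mat P * D) = transpose_mat D * P"
    using P D transpose_mult[of "transpose_mat P" m n D n] by simp
  finally show ?thesis using P D by simp
qed

lemma sym_mat_congruence:
  fixes P D :: "real mat"
  assumes P: "P \<in> carrier_mat n m" and D: "D \<in> carrier_mat n n" and "sym_mat D"
  shows "sym_mat (transpose_mat P * D * P)"
  using assms transpose_congruence[OF P D] unfolding sym_mat_def by simp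

lemma psd_mat_congruence:
  fixes P D :: "real mat"
  assumes P: "P \<in> carrier_mat n m" and D: "D \<in> carrier_mat n n" and psd: "psd_mat D"
  shows "psd_mat (transpose_mat P * D * P)"
  unfolding psd_mat_def
proof (intro conjI ballI)
  show "sym_mat (transpose_mat P * D * P)"
    using sym_mat_congruence[OF P D] psd unfolding psd_mat_def by simp
  fix v :: "real vec"
  assume "v \<in> carrier_vec (dim_row (transpose_mat P * D * P))"
  then have v: "v \<in> carrier_vec m" using P by simp
  have "0 \<le> (P *\<^sub>v v) \<bullet> (D *\<^sub>v (P *\<^sub>v v))"
    using psd P D v unfolding psd_mat_def by simp
  then show "0 \<le> v \<bullet> ((transpose_mat P * D * P) *\<^sub>v v)"
    unfolding quadratic_form_congruence[OF P D v] .
qed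

lemma pd_mat_congruence:
  fixes P D :: "real mat"
  assumes P: "P \<in> carrier_mat n m" and D: "D \<in> carrier_mat n n" and pd: "pd_mat D"
    and inj: "\<And>v. v \<in> carrier_vec m \<Longrightarrow> P *\<^sub>v v = 0\<^sub>v n \<Longrightarrow> v = 0\<^sub>v m"
  shows "pd_mat (transpose_mat P * D * P)"
  unfolding pd_mat_def
proof (intro conjI ballI impI)
  show "sym_mat (transpose_mat P * D * P)"
    using sym_mat_congruence[OF P D] pd unfolding pd_mat_def by simp
  fix v :: "real vec"
  assume "v \<in> carrier_vec (dim_row (transpose_mat P * D * P))"
    and "v \<noteq> 0\<^sub>v (dim_row (transpose_mat P * D * P))"
  then have v: "v \<in> carrier_vec m" and "v \<noteq> 0\<^sub>v m" using P by auto
  then have "P *\<^sub>v v \<noteq> 0\<^sub>v n" using inj by blast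
  then have "0 < (P *\<^sub>v v) \<bullet> (D *\<^sub>v (P *\<^sub>v v))"
    using pd P D v unfolding pd_mat_def by simp
  then show "0 < v \<bullet> ((transpose_mat P * D * P) *\<^sub>v v)"
    unfolding quadratic_form_congruence[OF P D v] .
qed

lemma left_inverse_mult_mat_vec_zero:
  fixes L T :: "real mat"
  assumes L: "L \<in> carrier_mat m n" and T: "T \<in> carrier_mat n m" and LT: "L * T = 1\<^sub>m m"
    and v: "v \<in> carrier_vec m" and "T *\<^sub>v v = 0\<^sub>v n"
  shows "v = 0\<^sub>v m"
proof -
  have "v = (L * T) *\<^sub>v v" using LT v by simp
  also have "\<dots> = L *\<^sub>v (T *\<^sub>v v)" using L T v by simp
  also have "\<dots> = 0\<^sub>v m" unfolding \<open>T *\<^sub>v v = 0\<^sub>v n\<close> using L by auto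
  finally show ?thesis .
qed

lemma mtrace_add:
  fixes A B :: "real mat"
  assumes "A \<in> carrier_mat n n" "B \<in> carrier_mat n n"
  shows "mtrace (A + B) = mtrace A + mtrace B"
  using assms unfolding mtrace_def by (simp add: sum.distrib)

lemma mtrace_minus:
  fixes A B :: "real mat"
  assumes "A \<in> carrier_mat n n" "B \<in> carrier_mat n n"
  shows "mtrace (A - B) = mtrace A - mtrace B"
  using assms unfolding mtrace_def by (simp add: sum_subtractf)

lemma quadratic_form_add_smult:
  fixes M :: "real mat"
  assumes M: "M \<in> carrier_mat n n" and u: "u \<in> carrier_vec n" and w: "w \<in> carrier_vec n"
  shows "(u + c \<cdot>\<^sub>v w) \<bullet> (M *\<^sub>v (u + c \<cdot>\<^sub>v w)) =
    u \<bullet> (M *\<^sub>v u) + c * (u \<bullet> (M *\<^sub>v w)) + c * (w \<bullet> (M *\<^sub>v u)) + c * c * (w \<bullet> (M *\<^sub>v w))"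
proof -
  have [simp]: "M *\<^sub>v u \<in> carrier_vec n" "M *\<^sub>v w \<in> carrier_vec n" "c \<cdot>\<^sub>v w \<in> carrier_vec n"
    using M u w by auto
  have "M *\<^sub>v (u + c \<cdot>\<^sub>v w) = M *\<^sub>v u + c \<cdot>\<^sub>v (M *\<^sub>v w)"
    using M u w by (simp add: mult_add_distrib_mat_vec mult_mat_vec)
  then show ?thesis
    using u w by (simp add: add_scalar_prod_distrib[of _ n] scalar_prod_add_distrib[of _ n] algebra_simps)
qed

lemma psd_mat_diag_nonneg:
  fixes M :: "real mat"
  assumes "psd_mat M" and M: "M \<in> carrier_mat n n" and i: "i < n"
  shows "0 \<le> M $$ (i, i)"
proof -
  have "0 \<le> unit_vec n i \<bullet> (M *\<^sub>v unit_vec n i)"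
    using assms unfolding psd_mat_def by (metis carrier_matD(1) unit_vec_carrier)
  then show ?thesis using M i by simp
qed

lemma psd_mat_entry_zero_of_diag_zero:
  fixes M :: "real mat"
  assumes psd: "psd_mat M" and M: "M \<in> carrier_mat n n" and i: "i < n" and j: "j < n"
    and "M $$ (i, i) = 0" and "M $$ (j, j) = 0"
  shows "M $$ (i, j) = 0"
proof -
  have "M $$ (j, i) = M $$ (i, j)"
    using psd M i j unfolding psd_mat_def sym_mat_def by (metis index_transpose_mat(1) carrier_matD)
  moreover have "0 \<le> M $$ (i, i) + c * M $$ (i, j) + c * M $$ (j, i) + c * c * M $$ (j, j)" for c
  proof -
    have "0 \<le> (unit_vec n i + c \<cdot>\<^sub>v unit_vec n j) \<bullet> (M *\<^sub>v (unit_vec n i + c \<cdot>\<^sub>v unit_vec n j))"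
      using psd M unfolding psd_mat_def by auto
    then show ?thesis
      unfolding quadratic_form_add_smult[OF M unit_vec_carrier unit_vec_carrier]
      using M i j by simp
  qed
  from this[of 1] this[of "-1"] show ?thesis using calculation assms by simp
qed

lemma psd_mat_trace_nonneg:
  fixes M :: "real mat"
  assumes "psd_mat M" and "M \<in> carrier_mat n n"
  shows "0 \<le> mtrace M"
  unfolding mtrace_def using assms psd_mat_diag_nonneg by (auto intro: sum_nonneg)

lemma psd_mat_trace_pos:
  fixes M :: "real mat"
  assumes psd: "psd_mat M" and M: "M \<in> carrier_mat n n" and "M \<noteq> 0\<^sub>m n n"
  shows "0 < mtrace M"
proof (rule ccontr)
  assume "\<not> 0 < mtrace M"
  then have "(\<Sum>i<n. M $$ (i, i)) = 0"
    using psd_mat_trace_nonneg[OF psd M] M unfolding mtrace_def by simp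
  then have "M $$ (i, i) = 0" if "i < n" for i
    using sum_nonneg_eq_0_iff[of "{..<n}" "\<lambda>i. M $$ (i, i)"] psd_mat_diag_nonneg[OF psd M] that
    by auto
  then have "M = 0\<^sub>m n n"
    using M psd_mat_entry_zero_of_diag_zero[OF psd M] by (intro eq_matI) auto
  with \<open>M \<noteq> 0\<^sub>m n n\<close> show False ..
qed

lemma inverse_difference_expansion:
  fixes A B Ai Bi :: "real mat"
  assumes A: "A \<in> carrier_mat n n" and B: "B \<in> carrier_mat n n"
    and Ai: "Ai \<in> carrier_mat n n" and Bi: "Bi \<in> carrier_mat n n"
    and "A * Ai = 1\<^sub>m n" "Ai * A = 1\<^sub>m n" "B * Bi = 1\<^sub>m n" "Bi * B = 1\<^sub>m n"
  shows "Bi - Ai = Ai * (A - B) * Ai + Ai * (A - B) * (Bi * (A - B) * Ai)"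
proof -
  define D where "D = A - B"
  have D: "D \<in> carrier_mat n n" unfolding D_def using A by (intro minus_carrier_mat B)
  have AiD: "Ai * D = 1\<^sub>m n - Ai * B"
    unfolding D_def mult_minus_distrib_mat[OF Ai A B] \<open>Ai * A = 1\<^sub>m n\<close> ..
  have BiD: "Bi * D = Bi * A - 1\<^sub>m n"
    unfolding D_def mult_minus_distrib_mat[OF Bi A B] \<open>Bi * B = 1\<^sub>m n\<close> ..
  have "Ai * D * Bi = Bi - Ai * B * Bi"
    unfolding AiD using Ai B Bi by (simp add: minus_mult_distrib_mat[of _ n n])
  also have "\<dots> = Bi - Ai" using Ai B Bi \<open>B * Bi = 1\<^sub>m n\<close> by simp
  finally have right: "Bi - Ai = Ai * D * Bi" ..
  have "Bi * D * Ai = Bi * A * Ai - Ai"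
    unfolding BiD using Ai A Bi by (simp add: minus_mult_distrib_mat[of _ n n])
  also have "\<dots> = Bi - Ai" using A Ai Bi \<open>A * Ai = 1\<^sub>m n\<close> by simp
  finally have "Bi = Ai + Bi * D * Ai" using Ai Bi by (intro eq_matI) auto
  then have "Ai * D * Bi = Ai * D * (Ai + Bi * D * Ai)" by (rule arg_cong)
  also have "\<dots> = Ai * D * Ai + Ai * D * (Bi * D * Ai)"
    using Ai D Bi by (intro mult_add_distrib_mat[of _ n n]) auto
  finally have "Ai * D * Bi = Ai * D * Ai + Ai * D * (Bi * D * Ai)" .
  then show ?thesis unfolding right D_def .
qed

lemma psd_mat_minv:
  assumes pd: "pd_mat A" and A: "A \<in> carrier_mat n n"
  shows "psd_mat (minv A)"
proof -
  have det: "det A \<noteq> 0" by (rule pd_mat_det_nonzero[OF pd A])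
  note inv = minv_inverse[OF A det]
  have "transpose_mat A = A" using pd unfolding pd_mat_def sym_mat_def by simp
  then have "transpose_mat (minv A) * A * minv A = minv A"
    using transpose_minv[OF A det] inv A by simp
  moreover have "psd_mat (transpose_mat (minv A) * A * minv A)"
    using psd_mat_congruence[OF inv(1) A pd_mat_imp_psd_mat[OF pd]] .
  ultimately show ?thesis by simp
qed

lemma inverse_sandwich_cancel:
  fixes A Ai D :: "real mat"
  assumes A: "A \<in> carrier_mat n n" and Ai: "Ai \<in> carrier_mat n n" and D: "D \<in> carrier_mat n n"
    and "A * Ai = 1\<^sub>m n" and "Ai * A = 1\<^sub>m n"
  shows "A * (Ai * D * Ai) * A = D"
proof -
  have "A * (Ai * D * Ai) * A = A * (Ai * D * (Ai * A))"
    using A Ai D by (simp add: assoc_mult_mat[of _ n n _ n _ n])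
  also have "\<dots> = A * (Ai * D)"
    using A Ai D \<open>Ai * A = 1\<^sub>m n\<close> by simp
  also have "\<dots> = (A * Ai) * D"
    using assoc_mult_mat[OF A Ai D] ..
  also have "\<dots> = D" unfolding \<open>A * Ai = 1\<^sub>m n\<close> using D by simp
  finally show ?thesis .
qed

lemma mtrace_minv_strict_antimono:
  assumes "loewner_lt B A" and pd_A: "pd_mat A" and pd_B: "pd_mat B"
  shows "mtrace (minv A) < mtrace (minv B)"
proof -
  define n where "n = dim_row A"
  define D where "D = A - B"
  define Ai where "Ai = minv A"
  define Bi where "Bi = minv B"
  have A: "A \<in> carrier_mat n n" and B: "B \<in> carrier_mat n n"
    using assms unfolding n_def loewner_lt_def loewner_le_def sym_mat_def carrier_mat_def by auto
  have psd_D: "psd_mat D" and "A \<noteq> B"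
    using assms unfolding D_def loewner_lt_def loewner_le_def by auto
  have D: "D \<in> carrier_mat n n" unfolding D_def using A by (intro minus_carrier_mat B)
  have det_A: "det A \<noteq> 0" by (rule pd_mat_det_nonzero[OF pd_A A])
  note inv_A = minv_inverse[OF A det_A, folded Ai_def]
  note inv_B = minv_inverse[OF B pd_mat_det_nonzero[OF pd_B B], folded Bi_def]
  have Ai: "Ai \<in> carrier_mat n n" and Bi: "Bi \<in> carrier_mat n n" using inv_A inv_B by simp_all
  have c1: "Ai * D * Ai \<in> carrier_mat n n" and c2: "Ai * D * (Bi * D * Ai) \<in> carrier_mat n n"
    using Ai D Bi by auto
  have sym_Ai: "transpose_mat Ai = Ai"
    unfolding Ai_def using transpose_minv[OF A det_A] pd_A unfolding pd_mat_def sym_mat_def by simp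
  have sym_D: "transpose_mat D = D" using psd_D unfolding psd_mat_def sym_mat_def by simp
  have psd_first: "psd_mat (Ai * D * Ai)"
    using psd_mat_congruence[OF Ai D psd_D] sym_Ai by simp
  have "transpose_mat (D * Ai) * Bi * (D * Ai) = Ai * D * (Bi * D * Ai)"
    using transpose_mult[OF D Ai] sym_Ai sym_D Ai D Bi
      assoc_mult_mat[of "Ai * D" n n Bi n "D * Ai" n] assoc_mult_mat[OF Bi D Ai] by simp
  then have psd_second: "psd_mat (Ai * D * (Bi * D * Ai))"
    using psd_mat_congruence[of "D * Ai" n n Bi] psd_mat_minv[OF pd_B B, folded Bi_def] D Ai Bi
    by auto
  have "Ai * D * Ai \<noteq> 0\<^sub>m n n"
  proof
    assume "Ai * D * Ai = 0\<^sub>m n n"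
    then have "D = 0\<^sub>m n n"
      using inverse_sandwich_cancel[OF A Ai D inv_A(2,3)] A by simp
    moreover have "A = B + D" unfolding D_def using A B by (intro eq_matI) auto
    ultimately show False using \<open>A \<noteq> B\<close> B by simp
  qed
  then have "0 < mtrace (Ai * D * Ai)" using psd_mat_trace_pos[OF psd_first c1] by blast
  moreover have "0 \<le> mtrace (Ai * D * (Bi * D * Ai))"
    using psd_mat_trace_nonneg[OF psd_second c2] .
  moreover have "mtrace Bi - mtrace Ai = mtrace (Ai * D * Ai) + mtrace (Ai * D * (Bi * D * Ai))"
    using inverse_difference_expansion[OF A B Ai Bi inv_A(2,3) inv_B(2,3), folded D_def]
      mtrace_minus[OF Bi Ai] mtrace_add[OF c1 c2] by simp
  ultimately show ?thesis unfolding Ai_def Bi_def by simp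
qed

definition selection_mat :: "nat \<Rightarrow> nat set \<Rightarrow> real mat" where
  "selection_mat N I = mat N (card I) (\<lambda>(k, j). if k = pick I j then 1 else 0)"

lemma selection_mat_carrier [simp]: "selection_mat N I \<in> carrier_mat N (card I)"
  and dim_selection_mat [simp]:
    "dim_row (selection_mat N I) = N" "dim_col (selection_mat N I) = card I"
  unfolding selection_mat_def by simp_all

lemma pick_subset_less:
  assumes "I \<subseteq> {0..<N}" and "j < card I"
  shows "pick I j \<in> I" "pick I j < N"
  using pick_in_set_le[OF assms(2)] assms(1) by auto

lemma pick_inj:
  assumes "i < card I" "j < card I" "pick I i = pick I j"
  shows "i = j"
  using card_pick_le[OF assms(1)] card_pick_le[OF assms(2)] assms(3) by metis

lemma col_selection_mat:
  assumes "j < card I"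
  shows "col (selection_mat N I) j = unit_vec N (pick I j)"
  using assms unfolding selection_mat_def unit_vec_def by auto

lemma mult_selection_mat:
  assumes J: "J \<subseteq> {0..<N}" and X: "X \<in> carrier_mat r N"
  shows "X * selection_mat N J = mat r (card J) (\<lambda>(k, j). X $$ (k, pick J j))"
  using X pick_subset_less[OF J]
  by (intro eq_matI) (auto simp: col_selection_mat)

lemma transpose_selection_mat_mult:
  assumes I: "I \<subseteq> {0..<N}" and X: "X \<in> carrier_mat N c"
  shows "transpose_mat (selection_mat N I) * X = mat (card I) c (\<lambda>(i, l). X $$ (pick I i, l))"
  using X pick_subset_less[OF I]
  by (intro eq_matI) (auto simp: col_selection_mat)

lemma submatrix_eq_selection_congruence:
  assumes K: "K \<in> carrier_mat N N" and I: "I \<subseteq> {0..<N}" and J: "J \<subseteq> {0..<N}"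
  shows "submatrix K I J = transpose_mat (selection_mat N I) * K * selection_mat N J"
proof -
  have rows: "{i. i < dim_row K \<and> i \<in> I} = I" and cols: "{j. j < dim_col K \<and> j \<in> J} = J"
    using K I J by auto
  have "transpose_mat (selection_mat N I) * K * selection_mat N J
      = mat (card I) N (\<lambda>(i, l). K $$ (pick I i, l)) * selection_mat N J"
    unfolding transpose_selection_mat_mult[OF I K] ..
  also have "\<dots> = mat (card I) (card J) (\<lambda>(i, j). K $$ (pick I i, pick J j))"
    by (subst mult_selection_mat[OF J, of _ "card I"]) (auto simp: pick_subset_less[OF J])
  finally show ?thesis unfolding submatrix_def rows cols by simp
qed

lemma transpose_selection_mat_mult_self:
  assumes I: "I \<subseteq> {0..<N}"
  shows "transpose_mat (selection_mat N I) * selection_mat N I = 1\<^sub>m (card I)"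
  unfolding transpose_selection_mat_mult[OF I selection_mat_carrier]
proof (rule eq_matI)
  fix i j
  assume "i < dim_row (1\<^sub>m (card I))" and "j < dim_col (1\<^sub>m (card I))"
  then have ij: "i < card I" "j < card I" by simp_all
  then have "pick I i = pick I j \<longleftrightarrow> i = j" using pick_inj by blast
  then show "mat (card I) (card I) (\<lambda>(i, l). selection_mat N I $$ (pick I i, l)) $$ (i, j)
      = 1\<^sub>m (card I) $$ (i, j)"
    using ij pick_subset_less(2)[OF I] by (simp add: selection_mat_def)
qed simp_all

lemma transpose_selection_mat_mult_disjoint:
  assumes I: "I \<subseteq> {0..<N}" and J: "J \<subseteq> {0..<N}" and disj: "I \<inter> J = {}"
  shows "transpose_mat (selection_mat N I) * selection_mat N J = 0\<^sub>m (card I) (card J)"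
  unfolding transpose_selection_mat_mult[OF I selection_mat_carrier]
proof (rule eq_matI)
  fix i j
  assume "i < dim_row (0\<^sub>m (card I) (card J))" and "j < dim_col (0\<^sub>m (card I) (card J))"
  then have ij: "i < card I" "j < card J" by simp_all
  then have "pick I i \<noteq> pick J j"
    using pick_subset_less(1)[OF I ij(1)] pick_subset_less(1)[OF J ij(2)] disj by auto
  then show "mat (card I) (card J) (\<lambda>(i, l). selection_mat N J $$ (pick I i, l)) $$ (i, j)
      = 0\<^sub>m (card I) (card J) $$ (i, j)"
    using ij pick_subset_less(2)[OF I] by (simp add: selection_mat_def)
qed simp_all

lemma transpose_schur_factor_mult:
  fixes K P Q Y :: "real mat"
  assumes K: "K \<in> carrier_mat N N" and sym: "transpose_mat K = K"
    and P: "P \<in> carrier_mat N a" and Q: "Q \<in> carrier_mat N b" and Y: "Y \<in> carrier_mat a a"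
    and sym_Y: "transpose_mat Y = Y"
  shows "transpose_mat (Q - P * (Y * (transpose_mat P * K * Q))) * K
    = transpose_mat Q * K - transpose_mat Q * K * P * Y * (transpose_mat P * K)"
proof -
  define Kab where "Kab = transpose_mat P * K * Q"
  define Kba where "Kba = transpose_mat Q * K * P"
  define W where "W = Y * Kab"
  have PT: "transpose_mat P \<in> carrier_mat a N" and QT: "transpose_mat Q \<in> carrier_mat b N"
    using P Q by auto
  have Kab: "Kab \<in> carrier_mat a b" and KbaY: "Kba * Y \<in> carrier_mat b a"
    and W: "W \<in> carrier_mat a b"
    unfolding Kab_def Kba_def W_def using K P Q Y by auto
  have "transpose_mat Kab = Kba"
    unfolding Kab_def Kba_def using transpose_mult[of "transpose_mat P * K" a N Q b] P K Q sym
    by (simp add: transpose_mult[of "transpose_mat P" a N K N])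
  then have "transpose_mat W = Kba * Y"
    unfolding W_def using transpose_mult[OF Y Kab] sym_Y by simp
  then have transpose_T: "transpose_mat (Q - P * W) = transpose_mat Q - Kba * Y * transpose_mat P"
    using transpose_minus[OF Q, of "P * W"] transpose_mult[OF P W] P W by simp
  have "transpose_mat (Q - P * W) * K = transpose_mat Q * K - Kba * Y * (transpose_mat P * K)"
    unfolding transpose_T minus_mult_distrib_mat[OF QT mult_carrier_mat[OF KbaY PT] K]
      assoc_mult_mat[OF KbaY PT K] ..
  then show ?thesis unfolding W_def Kab_def Kba_def .
qed

lemma congruence_eq_schur_complement:
  fixes K P Q Y :: "real mat"
  assumes K: "K \<in> carrier_mat N N" and sym: "transpose_mat K = K"
    and P: "P \<in> carrier_mat N a" and Q: "Q \<in> carrier_mat N b" and Y: "Y \<in> carrier_mat a a"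
    and inv: "transpose_mat P * K * P * Y = 1\<^sub>m a" and sym_Y: "transpose_mat Y = Y"
  defines "T \<equiv> Q - P * (Y * (transpose_mat P * K * Q))"
  shows "transpose_mat T * K * T
    = transpose_mat Q * K * Q - transpose_mat Q * K * P * Y * (transpose_mat P * K * Q)"
proof -
  define Kaa where "Kaa = transpose_mat P * K * P"
  define Kba where "Kba = transpose_mat Q * K * P"
  define W where "W = Y * (transpose_mat P * K * Q)"
  have Kaa: "Kaa \<in> carrier_mat a a" and Kba: "Kba \<in> carrier_mat b a"
    and W: "W \<in> carrier_mat a b" and PTK: "transpose_mat P * K \<in> carrier_mat a N"
    and QTK: "transpose_mat Q * K \<in> carrier_mat b N" and KbaY: "Kba * Y \<in> carrier_mat b a"
    unfolding Kaa_def Kba_def W_def using K P Q Y by auto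
  have KbaY_PTK: "Kba * Y * (transpose_mat P * K) \<in> carrier_mat b N"
    using KbaY PTK by simp
  have TK: "transpose_mat T * K = transpose_mat Q * K - Kba * Y * (transpose_mat P * K)"
    unfolding T_def Kba_def by (rule transpose_schur_factor_mult[OF K sym P Q Y sym_Y])
  have TK_carrier: "transpose_mat T * K \<in> carrier_mat b N"
    unfolding TK by (rule minus_carrier_mat[OF KbaY_PTK])
  have "transpose_mat T * K * P
      = transpose_mat Q * K * P - Kba * (Y * (transpose_mat P * K * P))"
    unfolding TK minus_mult_distrib_mat[OF QTK KbaY_PTK P] assoc_mult_mat[OF KbaY PTK P]
      assoc_mult_mat[OF Kba Y Kaa[unfolded Kaa_def]] ..
  also have "\<dots> = 0\<^sub>m b a"
    using mat_mult_left_right_inverse[OF Kaa Y inv[folded Kaa_def]] Kba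
    unfolding Kba_def[symmetric] Kaa_def[symmetric] by simp
  finally have TKP: "transpose_mat T * K * P = 0\<^sub>m b a" .
  have "transpose_mat T * K * T = transpose_mat T * K * (Q - P * W)"
    unfolding T_def W_def ..
  also have "\<dots> = transpose_mat T * K * Q - transpose_mat T * K * P * W"
    unfolding mult_minus_distrib_mat[OF TK_carrier Q mult_carrier_mat[OF P W]]
      assoc_mult_mat[OF TK_carrier P W] ..
  also have "\<dots> = transpose_mat T * K * Q"
    unfolding TKP using TK_carrier Q W by (intro eq_matI) auto
  also have "\<dots> = transpose_mat Q * K * Q - Kba * Y * (transpose_mat P * K * Q)"
    unfolding TK minus_mult_distrib_mat[OF QTK KbaY_PTK Q] assoc_mult_mat[OF KbaY PTK Q] ..
  finally show ?thesis unfolding Kba_def .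
qed

lemma transpose_selection_mat_left_inverse_minus:
  assumes I: "I \<subseteq> {0..<N}" and J: "J \<subseteq> {0..<N}" and disj: "I \<inter> J = {}"
    and W: "W \<in> carrier_mat (card J) (card I)"
  shows "transpose_mat (selection_mat N I) * (selection_mat N I - selection_mat N J * W)
    = 1\<^sub>m (card I)"
proof -
  have SIT: "transpose_mat (selection_mat N I) \<in> carrier_mat (card I) N" by simp
  have "transpose_mat (selection_mat N I) * (selection_mat N I - selection_mat N J * W)
      = transpose_mat (selection_mat N I) * selection_mat N I
        - transpose_mat (selection_mat N I) * selection_mat N J * W"
    unfolding mult_minus_distrib_mat[OF SIT selection_mat_carrier mult_carrier_mat[OF selection_mat_carrier W]]
      assoc_mult_mat[OF SIT selection_mat_carrier W] ..
  also have "\<dots> = 1\<^sub>m (card I) - 0\<^sub>m (card I) (card J) * W"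
    unfolding transpose_selection_mat_mult_self[OF I] transpose_selection_mat_mult_disjoint[OF I J disj] ..
  also have "\<dots> = 1\<^sub>m (card I)" using W by (intro eq_matI) auto
  finally show ?thesis .
qed

lemma selection_mat_mult_vec_zero:
  assumes I: "I \<subseteq> {0..<N}" and "v \<in> carrier_vec (card I)"
    and "selection_mat N I *\<^sub>v v = 0\<^sub>v N"
  shows "v = 0\<^sub>v (card I)"
  using left_inverse_mult_mat_vec_zero[OF _ selection_mat_carrier transpose_selection_mat_mult_self[OF I]]
    assms by simp

lemma pd_mat_principal_submatrix:
  assumes K: "K \<in> carrier_mat N N" and pd: "pd_mat K" and I: "I \<subseteq> {0..<N}"
  shows "pd_mat (submatrix K I I)"
  unfolding submatrix_eq_selection_congruence[OF K I I]
  using pd_mat_congruence[OF selection_mat_carrier K pd] selection_mat_mult_vec_zero[OF I] by blast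

lemma pd_mat_schur:
  assumes K: "K \<in> carrier_mat N N" and pd: "pd_mat K" and \<alpha>: "\<alpha> \<subseteq> {0..<N}"
  shows "pd_mat (schur K \<alpha>)"
proof -
  define \<beta> where "\<beta> = {0..<N} - \<alpha>"
  define a where "a = card \<alpha>"
  define b where "b = card \<beta>"
  define Sa where "Sa = selection_mat N \<alpha>"
  define Sb where "Sb = selection_mat N \<beta>"
  have \<beta>: "\<beta> \<subseteq> {0..<N}" and disj: "\<beta> \<inter> \<alpha> = {}" unfolding \<beta>_def by auto
  have Sa: "Sa \<in> carrier_mat N a" and Sb: "Sb \<in> carrier_mat N b"
    unfolding Sa_def Sb_def a_def b_def by simp_all
  have sym: "transpose_mat K = K" using pd unfolding pd_mat_def sym_mat_def by simp
  define Kaa where "Kaa = submatrix K \<alpha> \<alpha>"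
  have Kaa_eq: "Kaa = transpose_mat Sa * K * Sa"
    unfolding Kaa_def Sa_def by (rule submatrix_eq_selection_congruence[OF K \<alpha> \<alpha>])
  have Kaa: "Kaa \<in> carrier_mat a a" unfolding Kaa_eq using Sa K by simp
  have det: "det Kaa \<noteq> 0"
    using pd_mat_det_nonzero[OF pd_mat_principal_submatrix[OF K pd \<alpha>]] Kaa unfolding Kaa_def .
  define Y where "Y = minv Kaa"
  have Y: "Y \<in> carrier_mat a a" and Kaa_Y: "Kaa * Y = 1\<^sub>m a"
    unfolding Y_def using minv_inverse[OF Kaa det] by simp_all
  have sym_Y: "transpose_mat Y = Y"
    unfolding Y_def using transpose_minv[OF Kaa det] transpose_congruence[OF Sa K] sym
    by (simp add: Kaa_eq)
  define W where "W = Y * (transpose_mat Sa * K * Sb)"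
  have W: "W \<in> carrier_mat a b" unfolding W_def using Y Sa Sb K by simp
  define T where "T = Sb - Sa * W"
  have T: "T \<in> carrier_mat N b" unfolding T_def using Sa W by (intro minus_carrier_mat) simp
  have "schur K \<alpha> = transpose_mat T * K * T"
    unfolding T_def W_def
    using congruence_eq_schur_complement[OF K sym Sa Sb Y Kaa_Y[unfolded Kaa_eq] sym_Y] K
    by (simp add: schur_def \<beta>_def[symmetric] Sa_def Sb_def Y_def Kaa_def
        submatrix_eq_selection_congruence \<alpha> \<beta>)
  moreover have "transpose_mat Sb * T = 1\<^sub>m b"
    unfolding T_def Sa_def Sb_def b_def
    by (rule transpose_selection_mat_left_inverse_minus[OF \<beta> \<alpha> disj W[unfolded a_def b_def]])
  then have "pd_mat (transpose_mat T * K * T)"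
    using pd_mat_congruence[OF T K pd] left_inverse_mult_mat_vec_zero[of "transpose_mat Sb" b N T] Sb T
    by simp
  ultimately show ?thesis by simp
qed

theorem mainTheorem1:
  fixes N M :: nat and K :: "real mat" and \<alpha>s :: "nat set"
  assumes "N \<ge> 2" and "1 \<le> M" and "M < N"
    and "K \<in> carrier_mat N N" and "pd_mat K"
    and "\<alpha>s \<subseteq> {0..<N}" and "card \<alpha>s = M"
    and "\<forall>\<alpha>. \<alpha> \<subseteq> {0..<N} \<and> card \<alpha> = M \<longrightarrow>
           mtrace (minv (schur K \<alpha>)) \<le> mtrace (minv (schur K \<alpha>s))"
  shows "\<not> (\<exists>\<alpha>. \<alpha> \<subseteq> {0..<N} \<and> card \<alpha> = M \<and> loewner_lt (schur K \<alpha>) (schur K \<alpha>s))"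
proof
  assume "\<exists>\<alpha>. \<alpha> \<subseteq> {0..<N} \<and> card \<alpha> = M \<and> loewner_lt (schur K \<alpha>) (schur K \<alpha>s)"
  then obtain \<alpha> where \<alpha>: "\<alpha> \<subseteq> {0..<N}" "card \<alpha> = M"
    and lt: "loewner_lt (schur K \<alpha>) (schur K \<alpha>s)"
    by blast
  have "mtrace (minv (schur K \<alpha>s)) < mtrace (minv (schur K \<alpha>))"
    using mtrace_minv_strict_antimono[OF lt] pd_mat_schur[OF assms(4,5)] assms(6) \<alpha>(1) by blast
  moreover have "mtrace (minv (schur K \<alpha>)) \<le> mtrace (minv (schur K \<alpha>s))"
    using assms(8) \<alpha> by blast
  ultimately show False by simp
qed

end
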